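(* Let $G$ be a compact Lie group (not necessarily connected) and $\rho:G\to\mathbf O(V)$ an orthogonal representation on a finite-dimensional real inner product space $V$. Let $H$ be a fixed principal isotropy subgroup of the $G$-action on $V$, let $V^H$ be the subspace of vectors fixed by $H$, and let $N$ be the normalizer of $H$ in $G$ (so $N$ acts on $V^H$). For $p\in V$ put $\nu_p=(T_p(Gp))^\perp\subset V$, and for $p\in V^H$ put $\sigma_p=(T_p(Np))^\perp\cap V^H$. Then for every $p\in V^H$ we have $\sigma_p=\nu_p\cap V^H$.
   Context: A principal isotropy subgroup is the isotropy group $G_x$ of a point $x$ on a principal orbit of the action. Orthogonal complements are taken in $V$. *)

theory Defs
  imports "HOL-Analysis.Analysis" "HOL-Algebra.Group_Action"
begin

text \<open>For an embedded submanifold (e.g. an orbit of a compact group) this is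
  the usual tangent space.\<close>
definition tangent_space :: "'v::real_normed_vector set \<Rightarrow> 'v \<Rightarrow> 'v set" where
  "tangent_space S p = {v. \<exists>c :: real \<Rightarrow> 'v. c 0 = p \<and> (\<forall>\<^sub>F t in at 0. c t \<in> S)
                              \<and> (c has_vector_derivative v) (at 0)}"

definition fixed_subspace :: "('g \<Rightarrow> 'v \<Rightarrow> 'v) \<Rightarrow> 'g set \<Rightarrow> 'v set" where
  "fixed_subspace \<rho> H = {v. \<forall>h\<in>H. \<rho> h v = v}"

definition principal_point :: "('g, 'b) monoid_scheme \<Rightarrow> ('g \<Rightarrow> 'v \<Rightarrow> 'v) \<Rightarrow> 'v \<Rightarrow> bool" where
  "principal_point G \<rho> x \<longleftrightarrow>
     (\<forall>y. \<exists>g\<in>carrier G. (\<lambda>h. g \<otimes>\<^bsub>G\<^esub> h \<otimes>\<^bsub>G\<^esub> inv\<^bsub>G\<^esub> g) ` stabilizer G \<rho> x \<subseteq> stabilizer G \<rho> y)"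

definition principal_isotropy_subgroup :: "('g, 'b) monoid_scheme \<Rightarrow> ('g \<Rightarrow> 'v \<Rightarrow> 'v) \<Rightarrow> 'g set \<Rightarrow> bool" where
  "principal_isotropy_subgroup G \<rho> H \<longleftrightarrow> (\<exists>x. principal_point G \<rho> x \<and> H = stabilizer G \<rho> x)"

end

theory Submission
  imports Defs
begin

text \<open>
  Replace \<open>G\<close> by its image \<open>K\<close>, a compact group of orthogonal endomorphisms of \<open>V\<close>, with Lie
  algebra \<open>{X. \<forall>t. exp (t X) \<in> K}\<close>. Every tangent vector of the orbit \<open>G p\<close> is of the form
  \<open>X p\<close> with \<open>X\<close> in the Lie algebra. For \<open>v \<in> V\<^sup>H\<close>, among the Lie algebra elements \<open>Y\<close>
  with \<open>\<langle>v, Y p\<rangle> = \<langle>v, X p\<rangle>\<close> the one of least Frobenius norm is unique; conjugation by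
  \<open>H\<close> preserves both the constraint and the norm, so \<open>Y\<close> commutes with \<open>\<rho>(H)\<close>. (This
  replaces averaging over \<open>H\<close> with Haar measure.) Then \<open>exp (t Y)\<close> centralises \<open>\<rho>(H)\<close>,
  and since \<open>H\<close> is the isotropy group of a point, such elements of \<open>G\<close> normalise \<open>H\<close>. So
  \<open>Y p\<close> is tangent to \<open>N p\<close>, and \<open>v \<perp> T\<^sub>p(N p)\<close> gives \<open>\<langle>v, X p\<rangle> = \<langle>v, Y p\<rangle> = 0\<close>.
\<close>

section \<open>Exponential in Banach algebras\<close>

lemma tendsto_difference_quotient:
  assumes "(c has_vector_derivative w) (at x)"
  shows "((\<lambda>t. (c t - c x) /\<^sub>R (t - x)) \<longlongrightarrow> w) (at x)"
proof -
  have "((\<lambda>t. ((c t - c x) - (t - x) *\<^sub>R w) /\<^sub>R norm (t - x)) \<longlongrightarrow> 0) (at x)"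
    using assms unfolding has_vector_derivative_def has_derivative_at_within by blast
  hence "((\<lambda>t. norm (((c t - c x) - (t - x) *\<^sub>R w) /\<^sub>R norm (t - x))) \<longlongrightarrow> 0) (at x)"
    using tendsto_norm_zero by fastforce
  moreover have "\<forall>\<^sub>F t in at x. norm ((c t - c x) /\<^sub>R (t - x) - w)
                    \<le> norm (((c t - c x) - (t - x) *\<^sub>R w) /\<^sub>R norm (t - x))"
  proof (rule eventually_at_filter[THEN iffD2], intro always_eventually allI impI)
    fix t :: real assume "t \<noteq> x"
    hence "(c t - c x) /\<^sub>R (t - x) - w = ((c t - c x) - (t - x) *\<^sub>R w) /\<^sub>R (t - x)"
      by (simp add: scaleR_diff_right)
    thus "norm ((c t - c x) /\<^sub>R (t - x) - w) \<le> norm (((c t - c x) - (t - x) *\<^sub>R w) /\<^sub>R norm (t - x))"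
      by simp
  qed
  ultimately have "((\<lambda>t. (c t - c x) /\<^sub>R (t - x) - w) \<longlongrightarrow> 0) (at x)"
    by (rule Lim_null_comparison[rotated])
  thus ?thesis by (simp add: LIM_zero_iff)
qed

lemma isCont_exp_banach_algebra: "isCont (exp :: 'a::{real_normed_algebra_1,banach} \<Rightarrow> 'a) x"
proof -
  let ?r = "norm x + 1"
  have ul: "uniform_limit (cball 0 ?r) (\<lambda>n y. \<Sum>i<n. y^i /\<^sub>R fact i)
          (\<lambda>y. \<Sum>i. (y::'a)^i /\<^sub>R fact i) sequentially"
  proof (rule Weierstrass_m_test[where M="\<lambda>i. ?r^i /\<^sub>R fact i"])
    fix n and y :: 'a assume "y \<in> cball 0 ?r"
    hence "norm (y ^ n) \<le> ?r ^ n"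
      by (meson mem_cball_0 norm_ge_zero norm_power_ineq order_trans power_mono)
    thus "norm (y^n /\<^sub>R fact n) \<le> ?r^n /\<^sub>R fact n" by (simp add: divide_right_mono)
  qed (rule summable_exp_generic)
  have "continuous_on (cball 0 ?r) (\<lambda>y. \<Sum>i. (y::'a)^i /\<^sub>R fact i)"
    by (intro uniform_limit_theorem[OF _ ul] always_eventually allI continuous_intros) simp
  hence "continuous_on (cball 0 ?r) (exp :: 'a \<Rightarrow> 'a)"
    unfolding exp_def .
  hence "continuous_on (ball 0 ?r) (exp :: 'a \<Rightarrow> 'a)"
    by (rule continuous_on_subset) auto
  thus ?thesis by (simp add: continuous_on_eq_continuous_at)
qed

lemma tendsto_exp_banach_algebra [tendsto_intros]:
  "(f \<longlongrightarrow> l) F \<Longrightarrow> ((\<lambda>x. exp (f x :: 'a::{real_normed_algebra_1,banach})) \<longlongrightarrow> exp l) F"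
  using isCont_exp_banach_algebra isCont_tendsto_compose by blast

lemma norm_exp_minus_one_minus_le:
  fixes x :: "'a::{real_normed_algebra_1,banach}"
  shows "norm (exp x - 1 - x) \<le> norm x ^ 2 * exp (norm x)"
proof -
  let ?f = "\<lambda>n. x^n /\<^sub>R fact n"
  let ?g = "\<lambda>n. norm x ^ 2 * (norm x ^ n /\<^sub>R fact n)"
  have "?f sums exp x" by (rule exp_converges)
  hence "(\<lambda>n. ?f (Suc n)) sums (exp x - ?f 0)"
    using sums_Suc_iff[of ?f "exp x - ?f 0"] by (simp only: diff_add_cancel)
  hence "(\<lambda>n. ?f (Suc (Suc n))) sums (exp x - ?f 0 - ?f (Suc 0))"
    using sums_Suc_iff[of "\<lambda>n. ?f (Suc n)"] by (simp only: diff_add_cancel)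
  hence tail: "exp x - 1 - x = (\<Sum>n. ?f (Suc (Suc n)))" by (simp add: sums_iff)
  have g: "?g sums (norm x ^ 2 * exp (norm x))"
    by (rule sums_mult) (rule exp_converges)
  have norm_f: "norm (?f n) \<le> norm x ^ n / fact n" for n
    using norm_power_ineq[of x n] by (simp add: field_simps)
  have le: "norm (?f (Suc (Suc n))) \<le> ?g n" for n
  proof -
    have "norm (?f (Suc (Suc n))) \<le> norm x ^ Suc (Suc n) / fact (Suc (Suc n))"
      by (rule norm_f)
    also have "\<dots> \<le> norm x ^ Suc (Suc n) / fact n"
      by (intro divide_left_mono fact_mono) auto
    also have "\<dots> = ?g n" by (simp add: divide_inverse power2_eq_square)
    finally show ?thesis .
  qed
  have summable: "summable (\<lambda>n. norm (?f (Suc (Suc n))))"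
    by (rule summable_comparison_test[OF _ sums_summable[OF g]]) (use le in auto)
  have "norm (exp x - 1 - x) \<le> (\<Sum>n. norm (?f (Suc (Suc n))))"
    unfolding tail by (rule summable_norm[OF summable])
  also have "\<dots> \<le> (\<Sum>n. ?g n)"
    by (rule suminf_le[OF le summable sums_summable[OF g]])
  finally show ?thesis using g by (simp add: sums_iff)
qed

lemma norm_power_diff_le:
  fixes a b :: "'a::real_normed_algebra_1"
  assumes "norm a \<le> M" "norm b \<le> M"
  shows "norm (a^m - b^m) \<le> real m * M^(m - 1) * norm (a - b)"
proof (induction m)
  case (Suc m)
  have M: "0 \<le> M" using assms(1) norm_ge_zero order_trans by blast
  have "norm (b^m) \<le> M^m"
    by (meson assms(2) norm_ge_zero norm_power_ineq order_trans power_mono)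
  have "a^Suc m - b^Suc m = a * (a^m - b^m) + (a - b) * b^m"
    by (simp add: algebra_simps)
  hence "norm (a^Suc m - b^Suc m) \<le> norm a * norm (a^m - b^m) + norm (a - b) * norm (b^m)"
    by (metis norm_triangle_le norm_mult_ineq add_mono)
  also have "\<dots> \<le> M * (real m * M^(m - 1) * norm (a - b)) + norm (a - b) * M^m"
    using Suc.IH \<open>norm (b^m) \<le> M^m\<close> by (intro add_mono mult_mono assms(1)) (auto simp: M)
  also have "\<dots> = real (Suc m) * M^(Suc m - 1) * norm (a - b)"
    by (cases m) (simp_all add: algebra_simps)
  finally show ?case .
qed simp

lemma exp_scaleR_of_nat:
  fixes x :: "'a::{real_normed_algebra_1,banach}"
  shows "exp (real m *\<^sub>R x) = exp x ^ m"
proof (induction m)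
  case (Suc m)
  have "exp (real (Suc m) *\<^sub>R x) = exp (real m *\<^sub>R x) * exp x"
    by (simp add: algebra_simps exp_add_commuting[symmetric])
  thus ?case using Suc.IH by (metis power_Suc2)
qed simp

lemma norm_power_minus_exp_le:
  fixes B :: "'a::{real_normed_algebra_1,banach}"
  shows "norm ((1 + B)^m - exp (real m *\<^sub>R B)) \<le> real m * norm B ^ 2 * exp ((real m + 1) * norm B)"
proof -
  let ?M = "exp (norm B)"
  have "norm (1 + B) \<le> ?M"
    by (rule order_trans[OF norm_triangle_ineq]) (simp add: add.commute)
  hence "norm ((1 + B)^m - exp (real m *\<^sub>R B)) \<le> real m * ?M ^ (m - 1) * norm (1 + B - exp B)"
    unfolding exp_scaleR_of_nat by (rule norm_power_diff_le[OF _ norm_exp])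
  also have "\<dots> \<le> real m * ?M ^ m * (norm B ^ 2 * exp (norm B))"
  proof (rule mult_mono)
    show "real m * ?M ^ (m - 1) \<le> real m * ?M ^ m"
      by (rule mult_left_mono) (auto intro: power_increasing)
    show "norm (1 + B - exp B) \<le> norm B ^ 2 * exp (norm B)"
      using norm_exp_minus_one_minus_le[of B] by (simp add: norm_minus_commute algebra_simps)
  qed simp_all
  also have "\<dots> = real m * norm B ^ 2 * exp ((real m + 1) * norm B)"
    by (simp add: exp_of_nat_mult[symmetric] exp_add[symmetric] algebra_simps)
  finally show ?thesis .
qed

lemma tendsto_power_exp:
  fixes k :: "'i \<Rightarrow> 'a::{real_normed_algebra_1,banach}"
  assumes s: "\<And>i. s i > 0" "(s \<longlongrightarrow> 0) F"
    and k: "((\<lambda>i. (k i - 1) /\<^sub>R s i) \<longlongrightarrow> X) F"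
    and m: "((\<lambda>i. real (m i) * s i) \<longlongrightarrow> t) F"
  shows "((\<lambda>i. k i ^ m i) \<longlongrightarrow> exp (t *\<^sub>R X)) F"
proof -
  define U where "U i = (k i - 1) /\<^sub>R s i" for i
  define bound where "bound i = (real (m i) * s i) * s i * norm (U i) ^ 2
                               * exp ((real (m i) * s i + s i) * norm (U i))" for i
  have k_eq: "k i = 1 + s i *\<^sub>R U i" for i using s(1)[of i] by (simp add: U_def)
  have "((\<lambda>i. exp ((real (m i) * s i) *\<^sub>R U i)) \<longlongrightarrow> exp (t *\<^sub>R X)) F"
    using m k unfolding U_def by (intro tendsto_intros)
  moreover have "((\<lambda>i. k i ^ m i - exp ((real (m i) * s i) *\<^sub>R U i)) \<longlongrightarrow> 0) F"
  proof (rule Lim_null_comparison)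
    have "norm (k i ^ m i - exp ((real (m i) * s i) *\<^sub>R U i)) \<le> bound i" for i
    proof -
      have "norm (k i ^ m i - exp ((real (m i) * s i) *\<^sub>R U i))
          \<le> real (m i) * norm (s i *\<^sub>R U i) ^ 2 * exp ((real (m i) + 1) * norm (s i *\<^sub>R U i))"
        using norm_power_minus_exp_le[of "s i *\<^sub>R U i" "m i"] by (simp add: k_eq)
      also have "\<dots> = bound i"
        using s(1)[of i] by (simp add: bound_def power2_eq_square algebra_simps)
      finally show ?thesis .
    qed
    thus "\<forall>\<^sub>F i in F. norm (k i ^ m i - exp ((real (m i) * s i) *\<^sub>R U i)) \<le> bound i"
      by simp
    have "(bound \<longlongrightarrow> t * 0 * norm X ^ 2 * exp ((t + 0) * norm X)) F"
      using m k s(2) unfolding U_def bound_def by (intro tendsto_intros)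
    thus "(bound \<longlongrightarrow> 0) F" by simp
  qed
  ultimately show ?thesis by (rule Lim_transform)
qed

lemma tendsto_exp_difference_quotient:
  fixes X :: "'a::{real_normed_algebra_1,banach}"
  assumes "(s \<longlongrightarrow> 0) F" "\<And>i. s i \<noteq> 0"
  shows "((\<lambda>i. (exp (s i *\<^sub>R X) - 1) /\<^sub>R s i) \<longlongrightarrow> X) F"
proof -
  have "filterlim s (at 0) F"
    using assms by (auto simp: filterlim_at intro!: always_eventually)
  moreover have "((\<lambda>t. exp (t *\<^sub>R X)) has_vector_derivative X) (at 0)"
    using exp_scaleR_has_vector_derivative_right[of X 0 UNIV] by simp
  ultimately show ?thesis
    using filterlim_compose[OF tendsto_difference_quotient] by (fastforce simp: o_def)
qed

lemma exp_conjugate: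
  fixes h h' X :: "'a::{real_normed_algebra_1,banach}"
  assumes "h * h' = 1" "h' * h = 1"
  shows "exp (h * X * h') = h * exp X * h'"
proof -
  have pow: "(h * X * h')^n = h * X^n * h'" for n
  proof (induction n)
    case (Suc n)
    have "(h * X * h')^Suc n = (h * X^n * h') * (h * X * h')"
      by (simp only: Suc.IH power_Suc2)
    also have "\<dots> = h * X^n * (h' * h) * X * h'"
      by (simp add: mult.assoc)
    finally show ?case
      using assms(2) by (simp del: power_Suc add: mult.assoc power_Suc2)
  qed (simp add: assms(1))
  have "exp (h * X * h') = (\<Sum>n. h * (X^n /\<^sub>R fact n) * h')"
    by (simp add: exp_def pow)
  also have "\<dots> = (\<Sum>n. h * (X^n /\<^sub>R fact n)) * h'"
    by (rule suminf_mult2[symmetric]) (intro summable_mult summable_exp_generic)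
  also have "(\<Sum>n. h * (X^n /\<^sub>R fact n)) = h * exp X"
    using suminf_mult[OF summable_exp_generic[of X], of h] by (simp add: exp_def)
  finally show ?thesis .
qed

lemma exp_commute:
  fixes h X :: "'a::{real_normed_algebra_1,banach}"
  assumes "h * X = X * h"
  shows "h * exp X = exp X * h"
proof -
  have pow: "h * X^n = X^n * h" for n
    by (induction n) (simp_all add: assms mult.assoc flip: mult.assoc[of h])
  have "h * exp X = (\<Sum>n. h * (X^n /\<^sub>R fact n))"
    using suminf_mult[OF summable_exp_generic[of X], of h] by (simp add: exp_def)
  also have "\<dots> = (\<Sum>n. (X^n /\<^sub>R fact n) * h)"
    by (simp add: pow)
  also have "\<dots> = exp X * h"
    using suminf_mult2[OF summable_exp_generic[of X], of h] by (simp add: exp_def)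
  finally show ?thesis .
qed

section \<open>Linear endomorphisms of a Euclidean space\<close>

text \<open>A copy of the bounded linear maps, with composition as multiplication, so that the
  exponential series of a Banach algebra is available for endomorphisms.\<close>
typedef (overloaded) 'a endo = "UNIV :: ('a::euclidean_space \<Rightarrow>\<^sub>L 'a) set"
  morphisms Rep_endo Abs_endo by simp

setup_lifting type_definition_endo

instantiation endo :: (euclidean_space) real_normed_vector
begin
lift_definition norm_endo :: "'a endo \<Rightarrow> real" is norm .
lift_definition minus_endo :: "'a endo \<Rightarrow> 'a endo \<Rightarrow> 'a endo" is "(-)" .
lift_definition plus_endo :: "'a endo \<Rightarrow> 'a endo \<Rightarrow> 'a endo" is "(+)" .
lift_definition uminus_endo :: "'a endo \<Rightarrow> 'a endo" is "uminus" .
lift_definition zero_endo :: "'a endo" is "0" .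
lift_definition scaleR_endo :: "real \<Rightarrow> 'a endo \<Rightarrow> 'a endo" is "scaleR" .
definition dist_endo :: "'a endo \<Rightarrow> 'a endo \<Rightarrow> real"
  where "dist_endo a b = norm (a - b)"
definition sgn_endo :: "'a endo \<Rightarrow> 'a endo"
  where "sgn_endo x = scaleR (inverse (norm x)) x"
definition uniformity_endo :
  "(uniformity :: ('a endo \<times> 'a endo) filter) = (INF e\<in>{0 <..}. principal {(x, y). dist x y < e})"
definition open_endo :: "'a endo set \<Rightarrow> bool"
  where "open_endo S = (\<forall>x\<in>S. \<forall>\<^sub>F (x', y) in uniformity. x' = x \<longrightarrow> y \<in> S)"
instance
  apply standard
  unfolding dist_endo_def open_endo_def sgn_endo_def uniformity_endo
  apply (rule refl | (transfer, force simp: norm_triangle_ineq algebra_simps))+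
  done
end

instantiation endo :: (euclidean_space) real_normed_algebra_1
begin
lift_definition one_endo :: "'a endo" is "id_blinfun" .
lift_definition times_endo :: "'a endo \<Rightarrow> 'a endo \<Rightarrow> 'a endo" is "(o\<^sub>L)" .
instance
  apply standard
  apply (transfer; simp add: blinfun_eqI blinfun.bilinear_simps)+
    apply (metis blinfun_apply_id_blinfun blinfun.zero_left nonzero_Basis SOME_Basis)
   apply transfer apply (rule norm_blinfun_compose)
  apply transfer apply simp
  done
end

lemma norm_Rep_endo: "norm (Rep_endo x) = norm x"
  by (simp add: norm_endo.rep_eq)

lemma dist_Rep_endo: "dist (Rep_endo x) (Rep_endo y) = dist x y"
  by (simp add: dist_endo_def dist_norm norm_endo.rep_eq minus_endo.rep_eq)

lemma tendsto_Rep_endo_iff: "(f \<longlongrightarrow> l) F \<longleftrightarrow> ((\<lambda>n. Rep_endo (f n)) \<longlongrightarrow> Rep_endo l) F"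
  by (simp add: tendsto_iff dist_Rep_endo)

instance endo :: (euclidean_space) banach
proof
  fix X :: "nat \<Rightarrow> 'a endo" assume "Cauchy X"
  hence "Cauchy (\<lambda>n. Rep_endo (X n))" by (simp add: Cauchy_def dist_Rep_endo)
  then obtain L where "(\<lambda>n. Rep_endo (X n)) \<longlonglongrightarrow> L"
    using Cauchy_convergent_iff convergent_def by blast
  hence "X \<longlonglongrightarrow> Abs_endo L" by (simp add: tendsto_Rep_endo_iff Abs_endo_inverse)
  thus "convergent X" by (auto simp: convergent_def)
qed

instance endo :: (euclidean_space) heine_borel
proof
  fix f :: "nat \<Rightarrow> 'a endo" assume "bounded (range f)"
  hence "bounded (range (\<lambda>n. Rep_endo (f n)))"
    by (auto simp: bounded_iff norm_Rep_endo)
  then obtain l r where r: "strict_mono r" "((\<lambda>n. Rep_endo (f n)) \<circ> r) \<longlonglongrightarrow> l"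
    using bounded_imp_convergent_subsequence by blast
  hence "(f \<circ> r) \<longlonglongrightarrow> Abs_endo l"
    by (simp add: tendsto_Rep_endo_iff Abs_endo_inverse o_def)
  thus "\<exists>l r. strict_mono r \<and> (f \<circ> r) \<longlonglongrightarrow> l" using r(1) by blast
qed

lemma continuous_on_Rep_endo_iff:
  "continuous_on S f \<longleftrightarrow> continuous_on S (\<lambda>x. Rep_endo (f x))"
  by (simp add: continuous_on_def tendsto_Rep_endo_iff)

definition endo_apply :: "'a::euclidean_space endo \<Rightarrow> 'a \<Rightarrow> 'a" where
  "endo_apply x v = blinfun_apply (Rep_endo x) v"

definition endo_of :: "('a::euclidean_space \<Rightarrow> 'a) \<Rightarrow> 'a endo" where
  "endo_of f = Abs_endo (Blinfun f)"

lemma endo_apply_endo_of: "linear f \<Longrightarrow> endo_apply (endo_of f) = f"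
  unfolding endo_apply_def[abs_def] endo_of_def
  by (simp add: Abs_endo_inverse bounded_linear_Blinfun_apply linear_conv_bounded_linear)

lemma bounded_bilinear_endo_apply: "bounded_bilinear endo_apply"
proof -
  have *: "endo_apply = (\<lambda>x. blinfun_apply (Rep_endo x))"
    by (intro ext) (simp add: endo_apply_def)
  show ?thesis unfolding *
    apply (rule bounded_bilinear.intro)
        apply (simp_all add: plus_endo.rep_eq scaleR_endo.rep_eq blinfun.bilinear_simps)
    apply (rule exI[where x=1])
    apply (simp add: norm_Rep_endo[symmetric] norm_blinfun)
    done
qed

interpretation endo_apply: bounded_bilinear endo_apply
  by (rule bounded_bilinear_endo_apply)

lemma endo_apply_mult: "endo_apply (x * y) v = endo_apply x (endo_apply y v)"
  by (simp add: endo_apply_def times_endo.rep_eq)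

lemma endo_apply_one [simp]: "endo_apply 1 v = v"
  by (simp add: endo_apply_def one_endo.rep_eq)

lemma endo_eqI: "(\<And>v. endo_apply x v = endo_apply y v) \<Longrightarrow> x = y"
  by (metis Rep_endo_inject endo_apply_def blinfun_eqI)

lemma linear_endo_apply: "linear (endo_apply x)"
  by (rule bounded_linear.linear[OF endo_apply.bounded_linear_right])

lemma continuous_on_endo_apply_left: "continuous_on S (\<lambda>k. endo_apply k p)"
  by (intro linear_continuous_on endo_apply.bounded_linear_left)

text \<open>As \<open>continuous_on_blinfun_componentwise\<close>, but without requiring a Hausdorff domain.\<close>
lemma continuous_on_blinfun_componentwise':
  fixes f :: "'d::topological_space \<Rightarrow> 'e::euclidean_space \<Rightarrow>\<^sub>L 'f::real_normed_vector"
  assumes "\<And>i. i \<in> Basis \<Longrightarrow> continuous_on S (\<lambda>x. f x i)"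
  shows "continuous_on S f"
  unfolding continuous_on_def
proof
  fix x assume "x \<in> S"
  show "(f \<longlongrightarrow> f x) (at x within S)"
    by (rule tendsto_componentwise1) (use assms \<open>x \<in> S\<close> in \<open>auto simp: continuous_on_def\<close>)
qed

lemma continuous_on_endo_of:
  fixes f :: "'g::topological_space \<Rightarrow> 'a::euclidean_space \<Rightarrow> 'a"
  assumes lin: "\<And>g. g \<in> S \<Longrightarrow> linear (f g)"
    and cont: "continuous_on (S \<times> UNIV) (\<lambda>(g, v). f g v)"
  shows "continuous_on S (\<lambda>g. endo_of (f g))"
  unfolding continuous_on_Rep_endo_iff
proof (rule continuous_on_blinfun_componentwise')
  fix i :: 'a
  have "continuous_on S (\<lambda>g. (\<lambda>(g, v). f g v) (g, i))"
    by (rule continuous_on_compose2[OF cont]) (auto intro!: continuous_intros)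
  moreover have "blinfun_apply (Rep_endo (endo_of (f g))) i = f g i" if "g \<in> S" for g
    using fun_cong[OF endo_apply_endo_of[OF lin[OF that]], of i] by (simp add: endo_apply_def)
  ultimately show "continuous_on S (\<lambda>g. blinfun_apply (Rep_endo (endo_of (f g))) i)"
    using continuous_on_cong by force
qed

lemma endo_apply_exp_fixed:
  assumes "endo_apply X p = 0"
  shows "endo_apply (exp X) p = p"
proof -
  have "endo_apply (X ^ Suc n) p = 0" for n
    by (induction n) (simp_all add: endo_apply_mult assms endo_apply.zero_right)
  hence terms: "endo_apply (X^n /\<^sub>R fact n) p = (if n = 0 then p else 0)" for n
    by (cases n) (simp_all add: endo_apply.scaleR_left del: power_Suc)
  have "endo_apply (exp X) p = (\<Sum>n. endo_apply (X^n /\<^sub>R fact n) p)"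
    unfolding exp_def
    by (rule bounded_linear.suminf[OF endo_apply.bounded_linear_left summable_exp_generic])
  also have "\<dots> = p"
    using sums_single[of 0 "\<lambda>_. p"] by (simp add: terms sums_iff)
  finally show ?thesis .
qed

lemma tangent_space_mono: "S \<subseteq> T \<Longrightarrow> tangent_space S p \<subseteq> tangent_space T p"
  unfolding tangent_space_def by (auto elim!: eventually_mono)

lemma endo_apply_in_tangent_space:
  assumes "\<And>t. exp (t *\<^sub>R Y) \<in> S"
  shows "endo_apply Y p \<in> tangent_space ((\<lambda>k. endo_apply k p) ` S) p"
  unfolding tangent_space_def
proof (intro CollectI exI conjI)
  show "endo_apply (exp (0 *\<^sub>R Y)) p = p" by simp
  show "((\<lambda>t. endo_apply (exp (t *\<^sub>R Y)) p) has_vector_derivative endo_apply Y p) (at 0)"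
    using exp_scaleR_has_vector_derivative_right[of Y 0 UNIV]
    by (intro bounded_linear.has_vector_derivative[OF endo_apply.bounded_linear_left]) simp
  show "\<forall>\<^sub>F t in at 0. endo_apply (exp (t *\<^sub>R Y)) p \<in> (\<lambda>k. endo_apply k p) ` S"
    using assms by (intro always_eventually) blast
qed

section \<open>Compact groups of orthogonal endomorphisms\<close>

locale compact_orthogonal_group =
  fixes K :: "'a::euclidean_space endo set"
  assumes compact: "compact K"
    and one_mem: "1 \<in> K"
    and mult_mem: "a \<in> K \<Longrightarrow> b \<in> K \<Longrightarrow> a * b \<in> K"
    and inverse_ex: "a \<in> K \<Longrightarrow> \<exists>b\<in>K. a * b = 1 \<and> b * a = 1"
    and inner_endo_apply: "a \<in> K \<Longrightarrow> endo_apply a u \<bullet> endo_apply a w = u \<bullet> w"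
begin

definition lie_algebra :: "'a endo set" where
  "lie_algebra = {X. \<forall>t. exp (t *\<^sub>R X) \<in> K}"

lemma closed: "closed K"
  using compact compact_imp_closed by blast

lemma power_mem: "a \<in> K \<Longrightarrow> a ^ n \<in> K"
  by (induction n) (auto intro: one_mem mult_mem)

lemma norm_endo_apply: "a \<in> K \<Longrightarrow> norm (endo_apply a u) = norm u"
  using inner_endo_apply[of a u u] by (simp add: norm_eq_sqrt_inner)

lemma inverse_fixing:
  assumes "a \<in> K" "endo_apply a p = p"
  obtains b where "b \<in> K" "a * b = 1" "b * a = 1" "endo_apply b p = p"
proof -
  obtain b where b: "b \<in> K" "a * b = 1" "b * a = 1" using inverse_ex[OF assms(1)] by blast
  have "endo_apply b p = endo_apply (b * a) p" using assms(2) by (simp add: endo_apply_mult)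
  thus ?thesis using b that by simp
qed

lemma exp_mem: "X \<in> lie_algebra \<Longrightarrow> exp (t *\<^sub>R X) \<in> K"
  by (simp add: lie_algebra_def)

lemma lie_algebraI:
  assumes k: "\<And>n. k n \<in> K" and s: "\<And>n. s n > 0" "s \<longlonglongrightarrow> 0"
    and X: "(\<lambda>n. (k n - 1) /\<^sub>R s n) \<longlonglongrightarrow> X"
  shows "X \<in> lie_algebra"
proof -
  have nonneg: "exp (t *\<^sub>R X) \<in> K" if "t \<ge> 0" for t
  proof -
    define m where "m n = nat \<lfloor>t / s n\<rfloor>" for n
    have m: "t - s n \<le> real (m n) * s n \<and> real (m n) * s n \<le> t" for n
    proof -
      have "t / s n - 1 \<le> real (m n) \<and> real (m n) \<le> t / s n"
        using \<open>t \<ge> 0\<close> s(1)[of n] by (simp add: m_def)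
      thus ?thesis using s(1)[of n] by (simp add: field_simps)
    qed
    have "(\<lambda>n. real (m n) * s n) \<longlonglongrightarrow> t"
    proof (rule tendsto_sandwich[of "\<lambda>n. t - s n" _ _ "\<lambda>n. t"])
      show "\<forall>\<^sub>F n in sequentially. t - s n \<le> real (m n) * s n"
        "\<forall>\<^sub>F n in sequentially. real (m n) * s n \<le> t"
        using m by (simp_all add: always_eventually)
      show "(\<lambda>n. t - s n) \<longlonglongrightarrow> t" using tendsto_diff[OF tendsto_const s(2)] by simp
    qed simp
    hence "(\<lambda>n. k n ^ m n) \<longlonglongrightarrow> exp (t *\<^sub>R X)"
      by (rule tendsto_power_exp[OF s X])
    thus ?thesis by (rule closed_sequentially[OF closed power_mem[OF k]])
  qed
  have "exp (t *\<^sub>R X) \<in> K" for t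
  proof (cases "t \<ge> 0")
    case False
    then obtain b where b: "b \<in> K" "exp ((-t) *\<^sub>R X) * b = 1"
      using inverse_ex nonneg[of "-t"] by auto
    have "exp (t *\<^sub>R X) * exp ((-t) *\<^sub>R X) = 1"
      by (simp add: exp_add_commuting[symmetric])
    hence "exp (t *\<^sub>R X) = b"
      by (metis b(2) mult.assoc mult_1_left mult_1_right)
    thus ?thesis using b(1) by simp
  qed (rule nonneg)
  thus ?thesis by (simp add: lie_algebra_def)
qed

lemma lie_algebra_scaleR: "X \<in> lie_algebra \<Longrightarrow> c *\<^sub>R X \<in> lie_algebra"
  by (simp add: lie_algebra_def)

lemma lie_algebra_add:
  assumes X: "X \<in> lie_algebra" and Y: "Y \<in> lie_algebra"
  shows "X + Y \<in> lie_algebra"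
proof -
  define s where "s n = inverse (real (Suc n))" for n
  have s: "s \<longlonglongrightarrow> 0" "s n > 0" for n
    unfolding s_def[abs_def] by (rule LIMSEQ_inverse_real_of_nat) simp
  define k where "k n = exp (s n *\<^sub>R X) * exp (s n *\<^sub>R Y)" for n
  have k_eq: "(k n - 1) /\<^sub>R s n = ((exp (s n *\<^sub>R X) - 1) /\<^sub>R s n) * exp (s n *\<^sub>R Y)
                                 + (exp (s n *\<^sub>R Y) - 1) /\<^sub>R s n" for n
    by (simp add: k_def algebra_simps scaleR_diff_right)
  have "(\<lambda>n. ((exp (s n *\<^sub>R X) - 1) /\<^sub>R s n) * exp (s n *\<^sub>R Y) + (exp (s n *\<^sub>R Y) - 1) /\<^sub>R s n)
          \<longlonglongrightarrow> X * exp (0 *\<^sub>R Y) + Y"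
    using s(1) s(2)[THEN less_imp_neq, symmetric]
    by (intro tendsto_add tendsto_mult tendsto_exp_difference_quotient
        tendsto_exp_banach_algebra tendsto_scaleR tendsto_const) auto
  hence "(\<lambda>n. (k n - 1) /\<^sub>R s n) \<longlonglongrightarrow> X + Y" by (simp add: k_eq)
  moreover have "k n \<in> K" for n unfolding k_def by (intro mult_mem exp_mem X Y)
  ultimately show ?thesis using s by (intro lie_algebraI) auto
qed

lemma closed_lie_algebra: "closed lie_algebra"
proof -
  have "lie_algebra = (\<Inter>t. (\<lambda>X. exp (t *\<^sub>R X)) -` K)"
    by (auto simp: lie_algebra_def)
  moreover have "closed ((\<lambda>X. exp (t *\<^sub>R X)) -` K)" for t
    using closed
    by (intro continuous_closed_vimage isCont_o2[OF _ isCont_exp_banach_algebra] continuous_intros)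
  ultimately show ?thesis by (simp add: closed_INT)
qed

lemma lie_algebra_conjugate:
  assumes "X \<in> lie_algebra" "h \<in> K" "h' \<in> K" "h * h' = 1" "h' * h = 1"
  shows "h * X * h' \<in> lie_algebra"
  unfolding lie_algebra_def
proof (intro CollectI allI)
  fix t :: real
  have "exp (t *\<^sub>R (h * X * h')) = exp (h * (t *\<^sub>R X) * h')" by simp
  also have "\<dots> = h * exp (t *\<^sub>R X) * h'" by (rule exp_conjugate[OF assms(4,5)])
  finally show "exp (t *\<^sub>R (h * X * h')) \<in> K"
    using assms by (simp add: mult_mem exp_mem)
qed

end

section \<open>Tangent vectors of orbits\<close>

lemma strict_mono_choice_frequently:
  fixes P :: "nat \<Rightarrow> nat \<Rightarrow> bool"
  assumes "\<And>k. \<exists>\<^sub>F n in sequentially. P k n"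
  shows "\<exists>r. strict_mono r \<and> (\<forall>k. P k (r k))"
proof -
  have "\<exists>f. \<forall>n. P n (f n) \<and> f n < f (Suc n)"
  proof (rule dependent_nat_choice)
    show "\<exists>x. P 0 x" using assms[of 0] frequently_ex by blast
    fix x n
    from assms[of "Suc n"] obtain y where "y \<ge> Suc x" "P (Suc n) y"
      unfolding frequently_sequentially by blast
    thus "\<exists>y. P (Suc n) y \<and> x < y" by auto
  qed
  thus ?thesis by (auto simp: strict_mono_Suc_iff)
qed

context compact_orthogonal_group
begin

text \<open>Elements of \<open>K\<close> closest to the identity among those moving \<open>p\<close> to the same point
  replace a local section of \<open>K \<rightarrow> K p\<close>, which is not available without manifold structure.\<close>
definition minimal_representative :: "'a \<Rightarrow> 'a endo \<Rightarrow> bool" where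
  "minimal_representative p k \<longleftrightarrow> k \<in> K \<and>
     (\<forall>k'\<in>K. endo_apply k' p = endo_apply k p \<longrightarrow> norm (k - 1) \<le> norm (k' - 1))"

lemma ex_minimal_representative:
  assumes "q \<in> (\<lambda>k. endo_apply k p) ` K"
  obtains k where "minimal_representative p k" "endo_apply k p = q"
proof -
  define M where "M = K \<inter> {k. endo_apply k p = q}"
  have "compact M"
    unfolding M_def
    by (intro compact_Int_closed compact closed_Collect_eq continuous_on_endo_apply_left
        continuous_on_const)
  moreover have "M \<noteq> {}" using assms by (auto simp: M_def)
  moreover have "continuous_on M (\<lambda>k. norm (k - 1))" by (intro continuous_intros)
  ultimately obtain k where "k \<in> M" "\<forall>k'\<in>M. norm (k - 1) \<le> norm (k' - 1)"
    using continuous_attains_inf by blast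
  thus ?thesis using that by (auto simp: M_def minimal_representative_def)
qed

lemma minimal_representatives_tendsto_one:
  assumes k: "\<And>n. minimal_representative p (k n)"
    and kp: "(\<lambda>n. endo_apply (k n) p) \<longlonglongrightarrow> p"
  shows "k \<longlonglongrightarrow> 1"
proof (rule ccontr)
  have kK: "k n \<in> K" for n using k by (simp add: minimal_representative_def)
  assume "\<not> k \<longlonglongrightarrow> 1"
  then obtain e where e: "e > 0" "\<exists>\<^sub>F n in sequentially. \<not> norm (k n - 1) < e"
    by (auto simp: tendsto_iff dist_norm not_eventually)
  obtain r1 :: "nat \<Rightarrow> nat" where r1: "strict_mono r1" "\<And>j. \<not> norm (k (r1 j) - 1) < e"
    using strict_mono_choice_frequently[of "\<lambda>_ n. \<not> norm (k n - 1) < e"] e(2) by blast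
  obtain l r2 where l: "l \<in> K" "strict_mono r2" "((k \<circ> r1) \<circ> r2) \<longlonglongrightarrow> l"
    using compact_imp_seq_compact[OF compact] kK unfolding seq_compact_def by (metis comp_apply)
  define r where "r = r1 \<circ> r2"
  have r: "strict_mono r" unfolding r_def using r1(1) l(2) by (rule strict_mono_o)
  have kl: "(\<lambda>j. k (r j)) \<longlonglongrightarrow> l" using l(3) by (simp add: r_def o_def)
  have "(\<lambda>j. endo_apply (k (r j)) p) \<longlonglongrightarrow> endo_apply l p"
    by (intro endo_apply.tendsto kl tendsto_const)
  moreover have "(\<lambda>j. endo_apply (k (r j)) p) \<longlonglongrightarrow> p"
    using LIMSEQ_subseq_LIMSEQ[OF kp r] by (simp add: o_def)
  ultimately have "endo_apply l p = p" using LIMSEQ_unique by blast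
  then obtain l' where l': "l' \<in> K" "l * l' = 1" "endo_apply l' p = p"
    using inverse_fixing[OF l(1)] by blast
  have "(\<lambda>j. k (r j) * l' - 1) \<longlonglongrightarrow> l * l' - 1"
    by (intro tendsto_diff tendsto_mult kl tendsto_const)
  hence "\<forall>\<^sub>F j in sequentially. norm (k (r j) * l' - 1) < e"
    using e(1) l'(2) by (auto simp: tendsto_iff dist_norm)
  then obtain j where j: "norm (k (r j) * l' - 1) < e"
    by (auto simp: eventually_sequentially)
  have "norm (k (r j) - 1) \<le> norm (k (r j) * l' - 1)"
    using k[of "r j"] l' by (simp add: minimal_representative_def mult_mem endo_apply_mult)
  moreover have "\<not> norm (k (r j) - 1) < e" using r1(2)[of "r2 j"] by (simp add: r_def)
  ultimately show False using j by simp
qed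

text \<open>If the limiting direction \<open>X\<close> fixed \<open>p\<close>, then composing with \<open>exp (- s X)\<close> would
  give representatives closer to the identity by an amount of higher order in \<open>s\<close>.\<close>
lemma minimal_representatives_direction:
  assumes k: "\<And>n. minimal_representative p (k n)" "\<And>n. k n \<noteq> 1" "k \<longlonglongrightarrow> 1"
    and X: "(\<lambda>n. (k n - 1) /\<^sub>R norm (k n - 1)) \<longlonglongrightarrow> X"
  shows "endo_apply X p \<noteq> 0"
proof
  assume Xp: "endo_apply X p = 0"
  have kK: "k n \<in> K" for n using k(1) by (simp add: minimal_representative_def)
  define s where "s n = norm (k n - 1)" for n
  have s: "s n > 0" for n using k(2) by (simp add: s_def)
  have s0: "s \<longlonglongrightarrow> 0"
    unfolding s_def[abs_def] using tendsto_norm_zero[OF LIM_zero[OF k(3)]] .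
  have "X \<in> lie_algebra"
    using X by (intro lie_algebraI[OF kK s s0]) (simp add: s_def)
  define l where "l n = exp (s n *\<^sub>R - X)" for n
  define V where "V n = (k n - 1) /\<^sub>R s n" for n
  define E where "E n = (l n - 1) /\<^sub>R s n" for n
  have closer: "norm (k n - 1) \<le> norm (k n * l n - 1)" for n
  proof -
    have "l n \<in> K" using exp_mem[OF \<open>X \<in> lie_algebra\<close>, of "- s n"] by (simp add: l_def)
    moreover have "endo_apply (l n) p = p"
      unfolding l_def
      by (rule endo_apply_exp_fixed) (simp add: endo_apply.scaleR_left endo_apply.minus_left Xp)
    ultimately show ?thesis
      using k(1)[of n] by (simp add: minimal_representative_def mult_mem endo_apply_mult)
  qed
  have ge: "1 \<le> norm (V n + E n + s n *\<^sub>R (V n * E n))" for n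
  proof -
    have "k n = 1 + s n *\<^sub>R V n" "l n = 1 + s n *\<^sub>R E n"
      using s[of n] by (simp_all add: V_def E_def)
    hence "k n * l n - 1 = s n *\<^sub>R (V n + E n + s n *\<^sub>R (V n * E n))"
      by (simp add: ring_distribs scaleR_add_right)
    thus ?thesis using closer[of n] s[of n] by (simp add: s_def)
  qed
  have V: "V \<longlonglongrightarrow> X" using X by (simp add: V_def[abs_def] s_def)
  have E: "E \<longlonglongrightarrow> - X"
    unfolding E_def[abs_def] l_def using s0 s[THEN less_imp_neq]
    by (intro tendsto_exp_difference_quotient) auto
  have "(\<lambda>n. V n + E n + s n *\<^sub>R (V n * E n)) \<longlonglongrightarrow> X + - X + 0 *\<^sub>R (X * - X)"
    by (intro tendsto_add tendsto_scaleR tendsto_mult V E s0)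
  hence "\<forall>\<^sub>F n in sequentially. norm (V n + E n + s n *\<^sub>R (V n * E n)) < 1"
    by (auto simp: tendsto_iff)
  thus False using ge by (auto simp: eventually_sequentially not_less[symmetric])
qed

lemma minimal_representatives_bound:
  assumes k: "\<And>n. minimal_representative p (k n)" "k \<longlonglongrightarrow> 1"
  shows "\<exists>C. \<forall>\<^sub>F n in sequentially. norm (k n - 1) \<le> C * norm (endo_apply (k n) p - p)"
proof (rule ccontr)
  assume "\<nexists>C. \<forall>\<^sub>F n in sequentially. norm (k n - 1) \<le> C * norm (endo_apply (k n) p - p)"
  hence "\<exists>\<^sub>F n in sequentially. \<not> norm (k n - 1) \<le> real (Suc j) * norm (endo_apply (k n) p - p)"
    for j by (auto simp: not_eventually)
  then obtain r where r: "strict_mono r"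
    "\<And>j. real (Suc j) * norm (endo_apply (k (r j)) p - p) < norm (k (r j) - 1)"
    using strict_mono_choice_frequently[of
        "\<lambda>j n. \<not> norm (k n - 1) \<le> real (Suc j) * norm (endo_apply (k n) p - p)"]
    by (auto simp: not_le)
  have k1: "norm (k (r j) - 1) > 0" for j
    using r(2)[of j] by (meson le_less_trans mult_nonneg_nonneg norm_ge_zero of_nat_0_le_iff)
  define U where "U j = (k (r j) - 1) /\<^sub>R norm (k (r j) - 1)" for j
  have "norm (endo_apply (U j) p) \<le> inverse (real (Suc j))" for j
  proof -
    have "norm (endo_apply (k (r j)) p - p) / norm (k (r j) - 1) < inverse (real (Suc j))"
      using r(2)[of j] k1[of j] by (simp add: field_simps del: of_nat_Suc)
    thus ?thesis
      by (simp add: U_def endo_apply.scaleR_left endo_apply.diff_left divide_inverse mult.commute)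
  qed
  hence Up: "(\<lambda>j. endo_apply (U j) p) \<longlonglongrightarrow> 0"
    by (intro Lim_null_comparison[OF always_eventually LIMSEQ_inverse_real_of_nat]) auto
  have "bounded (range U)" using k1 by (auto simp: bounded_iff U_def)
  then obtain X r' where r': "strict_mono r'" "(U \<circ> r') \<longlonglongrightarrow> X"
    using bounded_imp_convergent_subsequence by blast
  have "(\<lambda>j. endo_apply ((U \<circ> r') j) p) \<longlonglongrightarrow> endo_apply X p"
    by (intro endo_apply.tendsto r'(2) tendsto_const)
  moreover have "(\<lambda>j. endo_apply ((U \<circ> r') j) p) \<longlonglongrightarrow> 0"
    using LIMSEQ_subseq_LIMSEQ[OF Up r'(1)] by (simp add: o_def)
  ultimately have "endo_apply X p = 0" using LIMSEQ_unique by blast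
  moreover have "endo_apply X p \<noteq> 0"
  proof (rule minimal_representatives_direction[where k="k \<circ> r \<circ> r'"])
    show "(k \<circ> r \<circ> r') \<longlonglongrightarrow> 1"
      using LIMSEQ_subseq_LIMSEQ[OF k(2) strict_mono_o[OF r(1) r'(1)]] by (simp add: o_assoc)
    show "(\<lambda>n. ((k \<circ> r \<circ> r') n - 1) /\<^sub>R norm ((k \<circ> r \<circ> r') n - 1)) \<longlonglongrightarrow> X"
      using r'(2) by (simp add: o_def U_def)
  qed (use k(1) k1 in auto)
  ultimately show False by contradiction
qed

lemma lie_algebra_image_of_quotients:
  assumes k: "\<And>n. k n \<in> K" and t: "\<And>n. t n > 0" "t \<longlonglongrightarrow> 0"
    and bound: "\<forall>\<^sub>F n in sequentially. norm ((k n - 1) /\<^sub>R t n) \<le> B"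
    and w: "(\<lambda>n. endo_apply ((k n - 1) /\<^sub>R t n) p) \<longlonglongrightarrow> w"
  shows "w \<in> (\<lambda>Z. endo_apply Z p) ` lie_algebra"
proof -
  obtain N where N: "\<And>n. n \<ge> N \<Longrightarrow> norm ((k n - 1) /\<^sub>R t n) \<le> B"
    using bound by (auto simp: eventually_sequentially)
  hence "bounded (range (\<lambda>n. (k (n + N) - 1) /\<^sub>R t (n + N)))"
    by (intro boundedI[where B=B]) auto
  then obtain Z r where r: "strict_mono r" "((\<lambda>n. (k (n + N) - 1) /\<^sub>R t (n + N)) \<circ> r) \<longlonglongrightarrow> Z"
    using bounded_imp_convergent_subsequence by blast
  define r' where "r' n = r n + N" for n
  have r': "strict_mono r'" using r(1) by (simp add: strict_mono_def r'_def)
  have Z: "(\<lambda>n. (k (r' n) - 1) /\<^sub>R t (r' n)) \<longlonglongrightarrow> Z"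
    using r(2) by (simp add: o_def r'_def)
  have "Z \<in> lie_algebra"
    using k t(1) LIMSEQ_subseq_LIMSEQ[OF t(2) r'] Z
    by (intro lie_algebraI[where k="\<lambda>n. k (r' n)" and s="\<lambda>n. t (r' n)"]) (simp_all add: o_def)
  moreover have "endo_apply Z p = w"
  proof (rule LIMSEQ_unique)
    show "(\<lambda>n. endo_apply ((k (r' n) - 1) /\<^sub>R t (r' n)) p) \<longlonglongrightarrow> endo_apply Z p"
      by (intro endo_apply.tendsto Z tendsto_const)
    show "(\<lambda>n. endo_apply ((k (r' n) - 1) /\<^sub>R t (r' n)) p) \<longlonglongrightarrow> w"
      using LIMSEQ_subseq_LIMSEQ[OF w r'] by (simp add: o_def)
  qed
  ultimately show ?thesis by blast
qed

lemma tangent_vector_in_lie_algebra: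
  assumes q: "\<And>n. q n \<in> (\<lambda>k. endo_apply k p) ` K"
    and t: "\<And>n. t n > 0" "t \<longlonglongrightarrow> 0"
    and w: "(\<lambda>n. (q n - p) /\<^sub>R t n) \<longlonglongrightarrow> w"
  shows "w \<in> (\<lambda>Z. endo_apply Z p) ` lie_algebra"
proof -
  have "(\<lambda>n. p + t n *\<^sub>R ((q n - p) /\<^sub>R t n)) \<longlonglongrightarrow> p + 0 *\<^sub>R w"
    by (intro tendsto_add tendsto_const tendsto_scaleR t(2) w)
  moreover have "p + t n *\<^sub>R ((q n - p) /\<^sub>R t n) = q n" for n
    using t(1)[of n] by simp
  ultimately have qp: "q \<longlonglongrightarrow> p" by simp
  have "\<exists>k. minimal_representative p k \<and> endo_apply k p = q n" for n
    using ex_minimal_representative[OF q[of n]] by blast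
  then obtain k where k: "\<And>n. minimal_representative p (k n)" and kp: "\<And>n. endo_apply (k n) p = q n"
    by metis
  have kK: "k n \<in> K" for n using k by (simp add: minimal_representative_def)
  have k1: "k \<longlonglongrightarrow> 1"
    using qp by (intro minimal_representatives_tendsto_one[OF k]) (simp add: kp)
  obtain C where C: "\<forall>\<^sub>F n in sequentially. norm (k n - 1) \<le> C * norm (q n - p)"
    using minimal_representatives_bound[OF k k1] by (auto simp: kp)
  obtain D where D: "\<And>n. norm ((q n - p) /\<^sub>R t n) \<le> D"
    using convergent_imp_bounded[OF w] by (auto simp: bounded_iff)
  have "\<forall>\<^sub>F n in sequentially. norm ((k n - 1) /\<^sub>R t n) \<le> \<bar>C\<bar> * D"
  proof (rule eventually_mono[OF C])
    fix n assume "norm (k n - 1) \<le> C * norm (q n - p)"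
    hence "norm ((k n - 1) /\<^sub>R t n) \<le> C * norm ((q n - p) /\<^sub>R t n)"
      using t(1)[of n] by (simp add: divide_right_mono)
    also have "\<dots> \<le> \<bar>C\<bar> * D"
      by (intro mult_mono abs_ge_self D) auto
    finally show "norm ((k n - 1) /\<^sub>R t n) \<le> \<bar>C\<bar> * D" .
  qed
  moreover have "(\<lambda>n. endo_apply ((k n - 1) /\<^sub>R t n) p) \<longlonglongrightarrow> w"
    using w by (simp add: endo_apply.scaleR_left endo_apply.diff_left kp)
  ultimately show ?thesis by (rule lie_algebra_image_of_quotients[OF kK t])
qed

lemma tangent_space_orbit_subset:
  "tangent_space ((\<lambda>k. endo_apply k p) ` K) p \<subseteq> (\<lambda>Z. endo_apply Z p) ` lie_algebra"
proof
  fix w assume "w \<in> tangent_space ((\<lambda>k. endo_apply k p) ` K) p"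
  then obtain c where c: "c 0 = p" "(c has_vector_derivative w) (at 0)"
    and "\<forall>\<^sub>F t in at 0. c t \<in> (\<lambda>k. endo_apply k p) ` K"
    by (auto simp: tangent_space_def)
  then obtain d where d: "d > 0" "\<And>t. t \<noteq> 0 \<Longrightarrow> \<bar>t\<bar> < d \<Longrightarrow> c t \<in> (\<lambda>k. endo_apply k p) ` K"
    by (auto simp: eventually_at dist_norm)
  define t where "t n = d / real (Suc (Suc n))" for n
  have t: "t n > 0" "t n \<noteq> 0" "t n < d" for n
    using d(1) by (auto simp: t_def field_simps intro: add_pos_nonneg)
  have t0: "t \<longlonglongrightarrow> 0"
    unfolding t_def[abs_def] by (intro LIMSEQ_Suc lim_const_over_n)
  have "filterlim t (at 0) sequentially"
    using t0 t(2) by (auto simp: filterlim_at intro!: always_eventually)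
  hence quotient: "(\<lambda>n. (c (t n) - p) /\<^sub>R t n) \<longlonglongrightarrow> w"
    using filterlim_compose[OF tendsto_difference_quotient[OF c(2)]] by (simp add: c(1) o_def)
  show "w \<in> (\<lambda>Z. endo_apply Z p) ` lie_algebra"
  proof (rule tangent_vector_in_lie_algebra[of "\<lambda>n. c (t n)", OF _ _ t0 quotient])
    show "c (t n) \<in> (\<lambda>k. endo_apply k p) ` K" for n
      using d(2)[of "t n"] t[of n] by simp
  qed (rule t(1))
qed

end

section \<open>Frobenius-norm minimisers\<close>

lemma power2_norm_eq_sum_Basis: "(norm x)\<^sup>2 = (\<Sum>b\<in>Basis. (x \<bullet> b)\<^sup>2)"
  unfolding power2_norm_eq_inner by (subst euclidean_inner) (simp add: power2_eq_square)

definition frobenius_sq :: "'a::euclidean_space endo \<Rightarrow> real" where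
  "frobenius_sq Y = (\<Sum>b\<in>Basis. (norm (endo_apply Y b))\<^sup>2)"

lemma continuous_on_frobenius_sq: "continuous_on S frobenius_sq"
  unfolding frobenius_sq_def[abs_def]
  by (intro continuous_intros continuous_on_endo_apply_left)

lemma frobenius_sq_midpoint:
  "frobenius_sq ((1/2) *\<^sub>R (A + B)) = (frobenius_sq A + frobenius_sq B) / 2 - frobenius_sq (A - B) / 4"
proof -
  have "(norm (endo_apply ((1/2) *\<^sub>R (A + B)) b))\<^sup>2
      = ((norm (endo_apply A b))\<^sup>2 + (norm (endo_apply B b))\<^sup>2) / 2 - (norm (endo_apply (A - B) b))\<^sup>2 / 4"
    for b
    by (simp add: endo_apply.scaleR_left endo_apply.add_left endo_apply.diff_left
        power2_norm_eq_inner inner_add inner_diff inner_commute field_simps)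
  thus ?thesis
    by (simp add: frobenius_sq_def sum_subtractf sum_divide_distrib[symmetric] sum.distrib)
qed

lemma frobenius_sq_diff_pos:
  assumes "A \<noteq> B"
  shows "frobenius_sq (A - B) > 0"
proof -
  obtain b where b: "b \<in> Basis" "endo_apply A b \<noteq> endo_apply B b"
    using assms linear_eq_stdbasis[OF linear_endo_apply linear_endo_apply] endo_eqI by metis
  hence "(norm (endo_apply (A - B) b))\<^sup>2 > 0" by (simp add: endo_apply.diff_left)
  thus ?thesis unfolding frobenius_sq_def by (intro sum_pos2[OF finite_Basis b(1)]) auto
qed

lemma norm_le_frobenius_sq:
  fixes Y :: "'a::euclidean_space endo"
  shows "norm Y \<le> real DIM('a) * sqrt (frobenius_sq Y)"
proof -
  have "norm Y \<le> (\<Sum>b\<in>Basis. norm (endo_apply Y b))"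
    unfolding norm_Rep_endo[symmetric] endo_apply_def by (rule norm_blinfun_euclidean_le)
  also have "\<dots> \<le> (\<Sum>b\<in>(Basis::'a set). sqrt (frobenius_sq Y))"
  proof (intro sum_mono real_le_rsqrt)
    fix b :: 'a assume "b \<in> Basis"
    thus "(norm (endo_apply Y b))\<^sup>2 \<le> frobenius_sq Y"
      unfolding frobenius_sq_def by (intro member_le_sum) auto
  qed
  finally show ?thesis by simp
qed

lemma ex_frobenius_sq_min:
  fixes S :: "'a::euclidean_space endo set"
  assumes "closed S" "Z \<in> S"
  obtains m where "m \<in> S" "\<And>Y. Y \<in> S \<Longrightarrow> frobenius_sq m \<le> frobenius_sq Y"
proof -
  define T where "T = S \<inter> {Y. frobenius_sq Y \<le> frobenius_sq Z}"
  have "closed T"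
    unfolding T_def
    by (intro closed_Int assms(1) closed_Collect_le continuous_on_frobenius_sq continuous_on_const)
  moreover have "bounded T"
  proof -
    have "norm Y \<le> real DIM('a) * sqrt (frobenius_sq Z)" if "Y \<in> T" for Y
      using norm_le_frobenius_sq[of Y] that
      by (elim order_trans) (auto simp: T_def intro!: mult_left_mono)
    thus ?thesis by (auto simp: bounded_iff)
  qed
  moreover have "Z \<in> T" using assms(2) by (simp add: T_def)
  ultimately obtain m where m: "m \<in> T" "\<forall>Y\<in>T. frobenius_sq m \<le> frobenius_sq Y"
    using continuous_attains_inf[of T frobenius_sq] continuous_on_frobenius_sq
    by (auto simp: compact_eq_bounded_closed)
  show ?thesis
  proof (rule that)
    show "m \<in> S" using m(1) by (simp add: T_def)
    fix Y assume "Y \<in> S"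
    show "frobenius_sq m \<le> frobenius_sq Y"
    proof (cases "frobenius_sq Y \<le> frobenius_sq Z")
      case True
      thus ?thesis using m(2) \<open>Y \<in> S\<close> by (simp add: T_def)
    next
      case False
      thus ?thesis using m(2) \<open>Z \<in> T\<close> by fastforce
    qed
  qed
qed

lemma frobenius_sq_min_unique:
  assumes "convex S" "m \<in> S" "m' \<in> S"
    and min: "\<And>Y. Y \<in> S \<Longrightarrow> frobenius_sq m \<le> frobenius_sq Y"
    and eq: "frobenius_sq m' = frobenius_sq m"
  shows "m' = m"
proof (rule ccontr)
  assume "m' \<noteq> m"
  hence "frobenius_sq (m - m') > 0" by (intro frobenius_sq_diff_pos) auto
  moreover have "(1/2) *\<^sub>R (m + m') \<in> S"
    using convexD[OF assms(1-3), of "1/2" "1/2"] by (simp add: scaleR_add_right)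
  hence "frobenius_sq m \<le> frobenius_sq ((1/2) *\<^sub>R (m + m'))" by (rule min)
  ultimately show False using eq by (simp add: frobenius_sq_midpoint)
qed

context compact_orthogonal_group
begin

lemma frobenius_sq_mult_left:
  assumes "h \<in> K"
  shows "frobenius_sq (h * Y) = frobenius_sq Y"
  using assms by (simp add: frobenius_sq_def endo_apply_mult norm_endo_apply)

lemma frobenius_sq_mult_right:
  assumes "g \<in> K" "g * g' = 1"
  shows "frobenius_sq (Y * g') = frobenius_sq Y"
proof -
  have adjoint_sum: "frobenius_sq (Y * g') = (\<Sum>c\<in>Basis. (norm (adjoint (endo_apply Y) c))\<^sup>2)"
    if "g \<in> K" "g * g' = 1" for g g'
  proof -
    have g': "endo_apply g' b \<bullet> u = b \<bullet> endo_apply g u" for b u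
      using inner_endo_apply[OF that(1), of "endo_apply g' b" u] that(2)
      by (simp add: endo_apply_mult[symmetric])
    have "frobenius_sq (Y * g') = (\<Sum>b\<in>Basis. \<Sum>c\<in>Basis. (endo_apply Y (endo_apply g' b) \<bullet> c)\<^sup>2)"
      by (simp add: frobenius_sq_def endo_apply_mult power2_norm_eq_sum_Basis)
    also have "\<dots> = (\<Sum>b\<in>Basis. \<Sum>c\<in>Basis. (b \<bullet> endo_apply g (adjoint (endo_apply Y) c))\<^sup>2)"
      by (simp add: adjoint_works[OF linear_endo_apply[of Y], symmetric] g')
    also have "\<dots> = (\<Sum>c\<in>Basis. \<Sum>b\<in>Basis. (endo_apply g (adjoint (endo_apply Y) c) \<bullet> b)\<^sup>2)"
      by (subst sum.swap) (simp add: inner_commute)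
    also have "\<dots> = (\<Sum>c\<in>Basis. (norm (adjoint (endo_apply Y) c))\<^sup>2)"
      using that(1) by (simp add: power2_norm_eq_sum_Basis[symmetric] norm_endo_apply)
    finally show ?thesis .
  qed
  show ?thesis using adjoint_sum[OF assms] adjoint_sum[OF one_mem, of 1] by simp
qed

lemma closed_convex_lie_algebra_slice:
  fixes v p :: 'a and c :: real
  defines "S \<equiv> {Y \<in> lie_algebra. v \<bullet> endo_apply Y p = c}"
  shows "closed S" "convex S"
proof -
  have "closed {Y. v \<bullet> endo_apply Y p = c}"
    by (intro closed_Collect_eq continuous_on_inner continuous_on_const
        continuous_on_endo_apply_left)
  moreover have "S = lie_algebra \<inter> {Y. v \<bullet> endo_apply Y p = c}"
    by (auto simp: S_def)
  ultimately show "closed S" using closed_lie_algebra by (simp add: closed_Int)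
  show "convex S"
  proof (rule convexI)
    fix X Y and a b :: real assume "X \<in> S" "Y \<in> S" "a + b = 1"
    thus "a *\<^sub>R X + b *\<^sub>R Y \<in> S"
      by (simp add: S_def lie_algebra_add lie_algebra_scaleR endo_apply.add_left
          endo_apply.scaleR_left inner_add_right flip: distrib_right)
  qed
qed

lemma ex_lie_algebra_commuting:
  assumes Hs: "Hs \<subseteq> K" "\<And>h. h \<in> Hs \<Longrightarrow> endo_apply h p = p" "\<And>h. h \<in> Hs \<Longrightarrow> endo_apply h v = v"
    and Z: "Z \<in> lie_algebra"
  obtains Y where "Y \<in> lie_algebra" "\<And>h. h \<in> Hs \<Longrightarrow> h * Y = Y * h"
    "v \<bullet> endo_apply Y p = v \<bullet> endo_apply Z p"
proof -
  define S where "S = {Y \<in> lie_algebra. v \<bullet> endo_apply Y p = v \<bullet> endo_apply Z p}"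
  have S: "closed S" "convex S"
    unfolding S_def by (rule closed_convex_lie_algebra_slice)+
  have "Z \<in> S" using Z by (simp add: S_def)
  then obtain m where m: "m \<in> S" "\<And>Y. Y \<in> S \<Longrightarrow> frobenius_sq m \<le> frobenius_sq Y"
    using ex_frobenius_sq_min[OF S(1)] by blast
  have "h * m = m * h" if h: "h \<in> Hs" for h
  proof -
    have hK: "h \<in> K" using h Hs(1) by auto
    obtain h' where h': "h' \<in> K" "h * h' = 1" "h' * h = 1" "endo_apply h' p = p"
      using inverse_fixing[OF hK Hs(2)[OF h]] .
    have "v \<bullet> endo_apply (h * m * h') p = endo_apply h v \<bullet> endo_apply h (endo_apply m p)"
      using Hs(3)[OF h] h'(4) by (simp add: endo_apply_mult)
    also have "\<dots> = v \<bullet> endo_apply m p" by (rule inner_endo_apply[OF hK])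
    finally have conj: "h * m * h' \<in> S"
      using m(1) lie_algebra_conjugate[OF _ hK h'(1-3)] by (simp add: S_def)
    moreover have "frobenius_sq (h * m * h') = frobenius_sq m"
      using frobenius_sq_mult_right[OF hK h'(2), of "h * m"] frobenius_sq_mult_left[OF hK, of m]
      by simp
    ultimately have "h * m * h' = m"
      using frobenius_sq_min_unique[OF S(2) m(1) conj] m(2) by blast
    hence "h * m * h' * h = m * h" by simp
    thus ?thesis using h'(3) by (simp add: mult.assoc)
  qed
  thus ?thesis using m(1) by (intro that[of m]) (auto simp: S_def)
qed

lemma orthogonal_tangent_space_orbit:
  assumes "Hs \<subseteq> K" "\<And>h. h \<in> Hs \<Longrightarrow> endo_apply h p = p" "\<And>h. h \<in> Hs \<Longrightarrow> endo_apply h v = v"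
    and v: "v \<in> orthogonal_comp
                (tangent_space ((\<lambda>k. endo_apply k p) ` {k \<in> K. \<forall>h\<in>Hs. h * k = k * h}) p)"
  shows "v \<in> orthogonal_comp (tangent_space ((\<lambda>k. endo_apply k p) ` K) p)"
  unfolding orthogonal_comp_def orthogonal_def
proof (intro CollectI ballI)
  fix w assume "w \<in> tangent_space ((\<lambda>k. endo_apply k p) ` K) p"
  then obtain Z where Z: "Z \<in> lie_algebra" "endo_apply Z p = w"
    using tangent_space_orbit_subset by blast
  obtain Y where Y: "Y \<in> lie_algebra" "\<And>h. h \<in> Hs \<Longrightarrow> h * Y = Y * h"
    "v \<bullet> endo_apply Y p = v \<bullet> endo_apply Z p"
    using ex_lie_algebra_commuting[OF assms(1-3) Z(1)] by blast
  have "exp (t *\<^sub>R Y) \<in> {k \<in> K. \<forall>h\<in>Hs. h * k = k * h}" for t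
    using exp_mem[OF Y(1)] exp_commute[of _ "t *\<^sub>R Y"] Y(2) by simp
  hence "endo_apply Y p \<in> tangent_space ((\<lambda>k. endo_apply k p) ` {k \<in> K. \<forall>h\<in>Hs. h * k = k * h}) p"
    by (rule endo_apply_in_tangent_space)
  thus "w \<bullet> v = 0"
    using v Y(3) Z(2) by (auto simp: orthogonal_comp_def orthogonal_def inner_commute)
qed

end

lemma (in group) stabilizer_conjugates_mem:
  assumes hom: "\<And>a b. a \<in> carrier G \<Longrightarrow> b \<in> carrier G \<Longrightarrow> \<rho> (a \<otimes> b) = \<rho> a \<circ> \<rho> b"
    and g: "g \<in> carrier G" and h: "h \<in> stabilizer G \<rho> x"
    and comm: "\<rho> g \<circ> \<rho> h = \<rho> h \<circ> \<rho> g"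
  shows "g \<otimes> h \<otimes> inv g \<in> stabilizer G \<rho> x" "inv g \<otimes> h \<otimes> g \<in> stabilizer G \<rho> x"
proof -
  have act: "\<rho> (a \<otimes> b) v = \<rho> a (\<rho> b v)" if "a \<in> carrier G" "b \<in> carrier G" for a b v
    using hom[OF that] by simp
  have hG: "h \<in> carrier G" and hx: "\<rho> h x = x" using h by (auto simp: stabilizer_def)
  have comm': "\<rho> g (\<rho> h y) = \<rho> h (\<rho> g y)" for y
    using comm by (metis comp_apply)
  have "\<rho> (g \<otimes> h \<otimes> inv g) x = \<rho> h (\<rho> g (\<rho> (inv g) x))"
    using g hG by (simp add: act comm')
  also have "\<dots> = \<rho> (h \<otimes> g \<otimes> inv g) x"
    using g hG by (simp only: act m_closed inv_closed)
  also have "\<dots> = x"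
    using g hG hx by (simp add: m_assoc)
  finally show "g \<otimes> h \<otimes> inv g \<in> stabilizer G \<rho> x"
    using g hG by (simp add: stabilizer_def)
  have "\<rho> (inv g \<otimes> h \<otimes> g) x = \<rho> (inv g) (\<rho> g (\<rho> h x))"
    using g hG by (simp add: act comm')
  also have "\<dots> = \<rho> (inv g \<otimes> g \<otimes> h) x"
    using g hG by (simp only: act m_closed inv_closed)
  also have "\<dots> = x"
    using g hG hx by simp
  finally show "inv g \<otimes> h \<otimes> g \<in> stabilizer G \<rho> x"
    using g hG by (simp add: stabilizer_def)
qed

lemma (in group) normalizer_stabilizerI:
  assumes hom: "\<And>a b. a \<in> carrier G \<Longrightarrow> b \<in> carrier G \<Longrightarrow> \<rho> (a \<otimes> b) = \<rho> a \<circ> \<rho> b"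
    and g: "g \<in> carrier G"
    and comm: "\<And>h. h \<in> stabilizer G \<rho> x \<Longrightarrow> \<rho> g \<circ> \<rho> h = \<rho> h \<circ> \<rho> g"
  shows "g \<in> normalizer G (stabilizer G \<rho> x)"
proof -
  let ?H = "stabilizer G \<rho> x"
  have conj: "g \<otimes> h \<otimes> inv g \<in> ?H" "inv g \<otimes> h \<otimes> g \<in> ?H" if "h \<in> ?H" for h
    using stabilizer_conjugates_mem[where \<rho>=\<rho> and x=x, OF hom g that comm[OF that]] by auto
  have "g <# ?H #> inv g = ?H"
  proof
    show "g <# ?H #> inv g \<subseteq> ?H"
      using conj(1) by (auto simp: l_coset_def r_coset_def)
    show "?H \<subseteq> g <# ?H #> inv g"
    proof
      fix h assume h: "h \<in> ?H"
      hence "h = g \<otimes> (inv g \<otimes> h \<otimes> g) \<otimes> inv g"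
        using g by (simp add: stabilizer_def m_assoc flip: m_assoc[of g "inv g"])
      thus "h \<in> g <# ?H #> inv g"
        using conj(2)[OF h] unfolding l_coset_def r_coset_def by blast
    qed
  qed
  thus ?thesis using g by (auto simp: normalizer_def stabilizer_def)
qed

lemma (in group) centralizer_orbit_subset_normalizer_orbit:
  assumes lin: "\<And>g. g \<in> carrier G \<Longrightarrow> linear (\<rho> g)"
    and hom: "\<And>a b. a \<in> carrier G \<Longrightarrow> b \<in> carrier G \<Longrightarrow> \<rho> (a \<otimes> b) = \<rho> a \<circ> \<rho> b"
  defines "R \<equiv> \<lambda>g. endo_of (\<rho> g)"
  shows "(\<lambda>k. endo_apply k p) ` {k \<in> R ` carrier G. \<forall>h\<in>R ` stabilizer G \<rho> x. h * k = k * h}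
           \<subseteq> orbit (G\<lparr>carrier := normalizer G (stabilizer G \<rho> x)\<rparr>) \<rho> p"
proof clarify
  have R: "endo_apply (R g) = \<rho> g" if "g \<in> carrier G" for g
    using lin[OF that] by (simp add: R_def endo_apply_endo_of)
  fix g assume g: "g \<in> carrier G" and comm: "\<forall>h\<in>R ` stabilizer G \<rho> x. h * R g = R g * h"
  have "\<rho> g \<circ> \<rho> h = \<rho> h \<circ> \<rho> g" if h: "h \<in> stabilizer G \<rho> x" for h
  proof -
    have "endo_apply (R g * R h) y = endo_apply (R h * R g) y" for y
      using comm h by auto
    thus ?thesis using h g by (auto simp: fun_eq_iff endo_apply_mult R stabilizer_def)
  qed
  hence "g \<in> normalizer G (stabilizer G \<rho> x)"
    using hom g by (intro normalizer_stabilizerI)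
  thus "endo_apply (R g) p \<in> orbit (G\<lparr>carrier := normalizer G (stabilizer G \<rho> x)\<rparr>) \<rho> p"
    using g by (auto simp: orbit_def R)
qed

lemma (in group) representation_one:
  assumes "inj (\<rho> \<one>)" "\<forall>g\<in>carrier G. \<forall>h\<in>carrier G. \<rho> (g \<otimes> h) = \<rho> g \<circ> \<rho> h"
  shows "\<rho> \<one> v = v"
proof -
  have "\<rho> \<one> (\<rho> \<one> v) = \<rho> \<one> v"
    using assms(2) by (metis one_closed l_one comp_apply)
  thus ?thesis using assms(1) by (meson injD)
qed

lemma compact_orthogonal_group_image:
  fixes \<rho> :: "'g::topological_space \<Rightarrow> 'a::euclidean_space \<Rightarrow> 'a"
  assumes grp: "group G" and cpt: "compact (carrier G)"
    and orth: "\<forall>g\<in>carrier G. orthogonal_transformation (\<rho> g)"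
    and hom: "\<forall>g\<in>carrier G. \<forall>h\<in>carrier G. \<rho> (g \<otimes>\<^bsub>G\<^esub> h) = \<rho> g \<circ> \<rho> h"
    and cont: "continuous_on (carrier G \<times> UNIV) (\<lambda>(g, v). \<rho> g v)"
  shows "compact_orthogonal_group ((\<lambda>g. endo_of (\<rho> g)) ` carrier G)"
proof -
  interpret G: group G by (rule grp)
  define R where "R g = endo_of (\<rho> g)" for g
  have R: "endo_apply (R g) = \<rho> g" if "g \<in> carrier G" for g
    using orth that by (simp add: R_def endo_apply_endo_of orthogonal_transformation_def)
  have R_mult: "R (g \<otimes>\<^bsub>G\<^esub> h) = R g * R h" if "g \<in> carrier G" "h \<in> carrier G" for g h
    using that by (intro endo_eqI) (simp add: R endo_apply_mult hom)
  have "\<rho> \<one>\<^bsub>G\<^esub> v = v" for v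
    using G.representation_one[of \<rho>] orth orthogonal_transformation_inj hom by auto
  hence R_one: "R \<one>\<^bsub>G\<^esub> = 1" by (intro endo_eqI) (simp add: R)
  have R_inv: "R g * R (inv\<^bsub>G\<^esub> g) = 1" "R (inv\<^bsub>G\<^esub> g) * R g = 1" if "g \<in> carrier G" for g
    using that R_mult[symmetric] R_one by simp_all
  show ?thesis
    unfolding R_def[symmetric]
  proof
    have "continuous_on (carrier G) R"
      unfolding R_def
    proof (rule continuous_on_endo_of)
      show "linear (\<rho> g)" if "g \<in> carrier G" for g
        using orth that by (simp add: orthogonal_transformation_def)
    qed (rule cont)
    thus "compact (R ` carrier G)"
      using cpt by (rule compact_continuous_image)
    show "1 \<in> R ` carrier G" using R_one G.one_closed by force
    show "a * b \<in> R ` carrier G" if ab: "a \<in> R ` carrier G" "b \<in> R ` carrier G" for a b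
    proof -
      obtain g h where "g \<in> carrier G" "h \<in> carrier G" "a = R g" "b = R h"
        using ab by blast
      hence "a * b = R (g \<otimes>\<^bsub>G\<^esub> h)" by (simp add: R_mult)
      thus ?thesis using \<open>g \<in> carrier G\<close> \<open>h \<in> carrier G\<close> by simp
    qed
    show "\<exists>b\<in>R ` carrier G. a * b = 1 \<and> b * a = 1" if a: "a \<in> R ` carrier G" for a
    proof -
      obtain g where "g \<in> carrier G" "a = R g" using a by blast
      thus ?thesis using R_inv[of g] G.inv_closed[of g] by blast
    qed
    show "endo_apply a u \<bullet> endo_apply a w = u \<bullet> w" if "a \<in> R ` carrier G" for a u w
      using that orth by (auto simp: R orthogonal_transformation_def)
  qed
qed

theorem lemma3p4:
  fixes G :: "('g::topological_space, 'b) monoid_scheme"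
    and \<rho> :: "'g \<Rightarrow> 'v::euclidean_space \<Rightarrow> 'v"
    and H :: "'g set" and p :: 'v
  assumes grp: "group G"
    and cpt: "compact (carrier G)"
    and mult_cont: "continuous_on (carrier G \<times> carrier G) (\<lambda>(g, h). g \<otimes>\<^bsub>G\<^esub> h)"
    and inv_cont: "continuous_on (carrier G) (\<lambda>g. inv\<^bsub>G\<^esub> g)"
    and orth: "\<forall>g\<in>carrier G. orthogonal_transformation (\<rho> g)"
    and hom: "\<forall>g\<in>carrier G. \<forall>h\<in>carrier G. \<rho> (g \<otimes>\<^bsub>G\<^esub> h) = \<rho> g \<circ> \<rho> h"
    and act_cont: "continuous_on (carrier G \<times> UNIV) (\<lambda>(g, v). \<rho> g v)"
    and princ: "principal_isotropy_subgroup G \<rho> H"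
    and p: "p \<in> fixed_subspace \<rho> H"
  shows "orthogonal_comp (tangent_space (orbit (G\<lparr>carrier := normalizer G H\<rparr>) \<rho> p) p)
           \<inter> fixed_subspace \<rho> H
         = orthogonal_comp (tangent_space (orbit G \<rho> p) p) \<inter> fixed_subspace \<rho> H"
proof -
  interpret G: group G by (rule grp)
  obtain x where H: "H = stabilizer G \<rho> x"
    using princ by (auto simp: principal_isotropy_subgroup_def)
  define R where "R g = endo_of (\<rho> g)" for g
  have R: "endo_apply (R g) = \<rho> g" if "g \<in> carrier G" for g
    using orth that by (simp add: R_def endo_apply_endo_of orthogonal_transformation_def)
  interpret K: compact_orthogonal_group "R ` carrier G"
    unfolding R_def by (rule compact_orthogonal_group_image[OF grp cpt orth hom act_cont])
  let ?N = "G\<lparr>carrier := normalizer G H\<rparr>"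
  let ?orbit = "\<lambda>S. (\<lambda>k. endo_apply k p) ` S"
  have centralizer: "?orbit {k \<in> R ` carrier G. \<forall>h\<in>R ` H. h * k = k * h} \<subseteq> orbit ?N \<rho> p"
    unfolding H R_def using orth hom
    by (intro G.centralizer_orbit_subset_normalizer_orbit) (auto simp: orthogonal_transformation_def)
  have orbit_G: "orbit G \<rho> p = ?orbit (R ` carrier G)"
    by (auto simp: orbit_def R image_image)
  have "v \<in> orthogonal_comp (tangent_space (orbit G \<rho> p) p)"
    if v: "v \<in> orthogonal_comp (tangent_space (orbit ?N \<rho> p) p)" "v \<in> fixed_subspace \<rho> H" for v
    unfolding orbit_G
  proof (rule K.orthogonal_tangent_space_orbit)
    show "R ` H \<subseteq> R ` carrier G" by (auto simp: H stabilizer_def)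
    show "endo_apply h p = p" "endo_apply h v = v" if "h \<in> R ` H" for h
      using that p v(2) by (auto simp: H R fixed_subspace_def stabilizer_def)
    show "v \<in> orthogonal_comp (tangent_space (?orbit {k \<in> R ` carrier G. \<forall>h\<in>R ` H. h * k = k * h}) p)"
      using v(1) orthogonal_comp_anti_mono[OF tangent_space_mono[OF centralizer]] by blast
  qed
  moreover have "orbit ?N \<rho> p \<subseteq> orbit G \<rho> p"
    by (auto simp: orbit_def normalizer_def stabilizer_def)
  ultimately show ?thesis
    using orthogonal_comp_anti_mono[OF tangent_space_mono] by blast
qed
end
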